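(* Let $0\le\alpha\le\beta$ and let $q=(q_n)$, $q_n\in(0,1)$, satisfy $st-\lim_n q_n=1$, $st-\lim_n q_n^n=a$ $(a<1)$ and $st-\lim_n 1/[n]_{q_n}=0$. Then for every non-decreasing bounded continuous function $f$ on $[0,\infty)$, every $x\ge 0$ and every $n\in\mathbb N$, $$\big|\mathfrak{D}_n^{(\alpha,\beta)}(f;q_n;x)-f(x)\big|\le 2\,\omega\big(f;\sqrt{\delta_n(x)}\big),$$ where, writing $q=q_n$, $$\delta_n(x)=\left(\frac{[n]_q(q[n]_q+1)}{q([n]_q+\beta)^2}+1-\frac{2[n]_q}{[n]_q+\beta}\right)x^2+\left(\frac{[n]_q+q^2[n]_q-2\alpha\beta-2q\beta}{([n]_q+\beta)^2}\right)x+\frac{q^2(1+q)+2q\alpha+\alpha^2}{([n]_q+\beta)^2}.$$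
   Context: $q$-calculus notation, for $0<q<1$: $[n]_q=\frac{1-q^n}{1-q}$; $[k]_q!=[k]_q[k-1]_q\cdots[1]_q$ with $[0]_q!=1$; $\left[\begin{array}{c}n\\k\end{array}\right]_q=\frac{[n]_q!}{[k]_q!\,[n-k]_q!}$; $(1+x)_q^m=(1+x)(1+qx)\cdots(1+q^{m-1}x)$ with $(1+x)_q^0=1$. The $q$-exponential is $E_q(z)=\sum_{k=0}^\infty q^{k(k-1)/2}\frac{z^k}{[k]_q!}=\prod_{j=0}^\infty(1+(1-q)q^jz)$. The $q$-Jackson integral is $\int_0^a g(t)\,d_qt=(1-q)a\sum_{j=0}^\infty g(aq^j)q^j$. For $n\in\mathbb N$, $0<q<1$, $x\in[0,\infty)$ define $p^q_{n,k}(x)=\left[\begin{array}{c}n+k-1\\k\end{array}\right]_q q^{k(k-1)/2}\frac{x^k}{(1+x)_q^{n+k}}$ and $s^q_{n,k}(t)=E_q(-[n]_qt)\frac{([n]_qt)^k}{[k]_q!}$. The $q$-Baskakov–Szász–Stancu operators with parameters $0\le\alpha\le\beta$ are $$\mathfrak{D}_n^{(\alpha,\beta)}(f;q;x)=[n]_q\sum_{k=0}^\infty p^q_{n,k}(x)\int_0^{q/(1-q^n)} q^{-k-1}s^q_{n,k}(t)\, f\!\left(\frac{[n]_q t q^{-k}+\alpha}{[n]_q+\beta}\right)d_qt .$$ With $q=q_n$, $[n]_q$ means $[n]_{q_n}$. Statistical convergence: for $K\subseteq\mathbb N$, its natural density is $\delta(K)=\lim_n \frac1n|\{j\le n: j\in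 K\}|$ (if it exists). A real sequence $(x_j)$ is statistically convergent to $L$, written $st-\lim_n x_n=L$, if for every $\epsilon>0$, $\delta(\{j:|x_j-L|\ge\epsilon\})=0$. Modulus of continuity: for bounded continuous $f$ on $[0,\infty)$ and $\delta>0$, $\omega(f;\delta)=\sup\{|f(t)-f(x)|: t,x\in[0,\infty),\ |t-x|\le\delta\}$. *)

theory Defs
  imports "HOL-Analysis.Analysis"
begin

definition qint :: "real \<Rightarrow> nat \<Rightarrow> real" where
  "qint q n = (1 - q ^ n) / (1 - q)"

definition qfact :: "real \<Rightarrow> nat \<Rightarrow> real" where
  "qfact q k = (\<Prod>i\<in>{1..k}. qint q i)"

definition qbinom :: "real \<Rightarrow> nat \<Rightarrow> nat \<Rightarrow> real" where
  "qbinom q n k = qfact q n / (qfact q k * qfact q (n - k))"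

definition qpow1 :: "real \<Rightarrow> real \<Rightarrow> nat \<Rightarrow> real" where
  "qpow1 q x m = (\<Prod>j<m. (1 + q ^ j * x))"

definition qexp :: "real \<Rightarrow> real \<Rightarrow> real" where
  "qexp q z = (\<Sum>k. q ^ (k * (k - 1) div 2) * z ^ k / qfact q k)"

definition jackson_int :: "real \<Rightarrow> (real \<Rightarrow> real) \<Rightarrow> real \<Rightarrow> real" where
  "jackson_int q g a = (1 - q) * a * (\<Sum>j. g (a * q ^ j) * q ^ j)"

definition p_nk :: "real \<Rightarrow> nat \<Rightarrow> nat \<Rightarrow> real \<Rightarrow> real" where
  "p_nk q n k x = qbinom q (n + k - 1) k * q ^ (k * (k - 1) div 2) * x ^ k / qpow1 q x (n + k)"

definition s_nk :: "real \<Rightarrow> nat \<Rightarrow> nat \<Rightarrow> real \<Rightarrow> real" where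
  "s_nk q n k t = qexp q (- qint q n * t) * (qint q n * t) ^ k / qfact q k"

definition BSS :: "nat \<Rightarrow> real \<Rightarrow> real \<Rightarrow> (real \<Rightarrow> real) \<Rightarrow> real \<Rightarrow> real \<Rightarrow> real" where
  "BSS n \<alpha> \<beta> f q x = qint q n * (\<Sum>k. p_nk q n k x *
      jackson_int q (\<lambda>t. (1 / q ^ (k + 1)) * s_nk q n k t *
          f ((qint q n * t * (1 / q ^ k) + \<alpha>) / (qint q n + \<beta>))) (q / (1 - q ^ n)))"

definition st_lim :: "(nat \<Rightarrow> real) \<Rightarrow> real \<Rightarrow> bool" where
  "st_lim x L \<longleftrightarrow> (\<forall>\<epsilon>>0.
     (\<lambda>n. real (card {j\<in>{1..n}. \<bar>x j - L\<bar> \<ge> \<epsilon>}) / real n) \<longlonglongrightarrow> 0)"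

definition modcont :: "(real \<Rightarrow> real) \<Rightarrow> real \<Rightarrow> real" where
  "modcont f \<delta> = Sup {\<bar>f t - f x\<bar> | t x. t \<ge> 0 \<and> x \<ge> 0 \<and> \<bar>t - x\<bar> \<le> \<delta>}"

definition delta_n :: "real \<Rightarrow> nat \<Rightarrow> real \<Rightarrow> real \<Rightarrow> real \<Rightarrow> real" where
  "delta_n q n \<alpha> \<beta> x =
     (qint q n * (q * qint q n + 1) / (q * (qint q n + \<beta>)^2) + 1 - 2 * qint q n / (qint q n + \<beta>)) * x^2
   + ((qint q n + q^2 * qint q n - 2 * \<alpha> * \<beta> - 2 * q * \<beta>) / (qint q n + \<beta>)^2) * x
   + (q^2 * (1 + q) + 2 * q * \<alpha> + \<alpha>^2) / (qint q n + \<beta>)^2"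

end

theory Submission
  imports Defs
begin

text \<open>Evaluating the Jackson integral at its nodes \<open>q\<^sup>j\<^sup>+\<^sup>1/(1 - q\<^sup>n)\<close> writes the operator as a
  double weighted average \<open>\<Sum>\<^sub>k p\<^sub>n\<^sub>,\<^sub>k(x) \<Sum>\<^sub>j w\<^sub>k\<^sub>j f(u\<^sub>k\<^sub>j)\<close> with nonnegative weights.  Both
  families of weights sum to 1: the inner ones because the nodal values of \<open>E\<^sub>q\<close> telescope by the
  functional equation \<open>E\<^sub>q(z) = (1 + (1 - q) z) E\<^sub>q(qz)\<close>, the outer ones by a q-Pascal recursion
  in \<open>n\<close>.  The same two mechanisms give the first and second moments in closed form, and the
  second central moment of the operator at \<open>x\<close> turns out to be exactly \<open>\<delta>\<^sub>n(x) > 0\<close>.  The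
  estimate is then the Shisha--Mond argument: \<open>|f t - f x| \<le> \<omega>(f,\<delta>) (1 + (t - x)\<^sup>2/\<delta>\<^sup>2)\<close>,
  averaged and evaluated at \<open>\<delta> = \<surd>\<delta>\<^sub>n(x)\<close>.\<close>

section \<open>q-integers and the q-exponential\<close>

lemma qint_ge_1:
  assumes "0 < q" "q < 1" "1 \<le> n"
  shows "1 \<le> qint q n"
proof -
  have "q ^ n \<le> q ^ 1" using assms by (intro power_decreasing) auto
  then show ?thesis using assms unfolding qint_def by (simp add: field_simps)
qed

lemma qint_le_inverse: "0 < q \<Longrightarrow> q < 1 \<Longrightarrow> qint q n \<le> 1 / (1 - q)"
  unfolding qint_def by (simp add: divide_right_mono)

lemma qint_times_one_minus: "q \<noteq> 1 \<Longrightarrow> qint q n * (1 - q) = 1 - q ^ n"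
  unfolding qint_def by simp

lemma qfact_Suc: "qfact q (Suc k) = qfact q k * qint q (Suc k)"
  unfolding qfact_def by (simp add: prod.atLeast1_atMost_eq prod.lessThan_Suc)

lemma qfact_ge_1: "0 < q \<Longrightarrow> q < 1 \<Longrightarrow> 1 \<le> qfact q k"
  unfolding qfact_def by (intro prod_ge_1) (auto intro: qint_ge_1)

lemma qfact_pos: "0 < q \<Longrightarrow> q < 1 \<Longrightarrow> 0 < qfact q k"
  using qfact_ge_1[of q k] by linarith

lemma triangular_Suc: "Suc k * (Suc k - 1) div 2 = k * (k - 1) div 2 + k"
proof -
  have "Suc k * (Suc k - 1) = k * (k - 1) + 2 * k" by (cases k) (auto simp: algebra_simps)
  then show ?thesis by simp
qed

lemma summable_triangular_power:
  fixes q c :: real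
  assumes "0 < q" "q < 1"
  shows "summable (\<lambda>k. q ^ (k * (k - 1) div 2) * c ^ k)" (is "summable ?b")
proof -
  have "(\<lambda>k. q ^ k * \<bar>c\<bar>) \<longlonglongrightarrow> 0 * \<bar>c\<bar>"
    by (intro tendsto_mult LIMSEQ_power_zero) (use assms in auto)
  then have "eventually (\<lambda>k. q ^ k * \<bar>c\<bar> < 1/2) sequentially"
    by (intro order_tendstoD) auto
  then obtain N where N: "\<And>k. k \<ge> N \<Longrightarrow> q ^ k * \<bar>c\<bar> < 1/2"
    by (auto simp: eventually_sequentially)
  show ?thesis
  proof (rule summable_ratio_test[of "1/2" N])
    fix k assume "N \<le> k"
    have "?b (Suc k) = (q ^ k * c) * ?b k"
      by (simp only: triangular_Suc power_add power_Suc) (simp add: algebra_simps)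
    then have "norm (?b (Suc k)) = (q ^ k * \<bar>c\<bar>) * norm (?b k)"
      using assms by (simp add: abs_mult)
    also have "\<dots> \<le> 1/2 * norm (?b k)"
      using N[OF \<open>N \<le> k\<close>] by (intro mult_right_mono) auto
    finally show "norm (?b (Suc k)) \<le> 1/2 * norm (?b k)" .
  qed simp
qed

definition qexp_coeff :: "real \<Rightarrow> nat \<Rightarrow> real" where
  "qexp_coeff q k = q ^ (k * (k - 1) div 2) / qfact q k"

lemma qexp_powser: "qexp q z = (\<Sum>k. qexp_coeff q k * z ^ k)"
  unfolding qexp_def qexp_coeff_def by simp

lemma qexp_coeff_Suc:
  assumes "0 < q" "q < 1"
  shows "qint q (Suc k) * qexp_coeff q (Suc k) = q ^ k * qexp_coeff q k"
  using qint_ge_1[OF assms, of "Suc k"] qfact_pos[OF assms, of k]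
  unfolding qexp_coeff_def qfact_Suc triangular_Suc power_add by (simp add: field_simps)

lemma summable_qexp:
  assumes "0 < q" "q < 1"
  shows "summable (\<lambda>k. qexp_coeff q k * z ^ k)"
proof (rule summable_comparison_test)
  show "summable (\<lambda>k. q ^ (k * (k - 1) div 2) * \<bar>z\<bar> ^ k)"
    by (rule summable_triangular_power[OF assms])
  have "\<bar>qexp_coeff q k * z ^ k\<bar> \<le> q ^ (k * (k - 1) div 2) * \<bar>z\<bar> ^ k" for k
    using assms qfact_ge_1[OF assms, of k] mult_left_mono[of 1 "qfact q k" "\<bar>z\<bar> ^ k"]
    by (simp add: qexp_coeff_def abs_mult power_abs divide_le_eq)
  then show "\<exists>N. \<forall>k\<ge>N. norm (qexp_coeff q k * z ^ k) \<le> q ^ (k * (k - 1) div 2) * \<bar>z\<bar> ^ k"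
    by auto
qed

lemma qexp_functional_equation:
  assumes q: "0 < q" "q < 1"
  shows "qexp q z = (1 + (1 - q) * z) * qexp q (q * z)"
proof -
  define d where "d k = qexp_coeff q k * z ^ k - qexp_coeff q k * (q * z) ^ k" for k
  have "d (Suc k) = (1 - q) * z * (qexp_coeff q k * (q * z) ^ k)" for k
  proof -
    have "d (Suc k) = qexp_coeff q (Suc k) * z ^ Suc k * (1 - q ^ Suc k)"
      by (simp add: d_def power_mult_distrib algebra_simps)
    also have "1 - q ^ Suc k = qint q (Suc k) * (1 - q)"
      using q by (simp add: qint_times_one_minus)
    finally show ?thesis
      by (simp add: qexp_coeff_Suc[OF q] power_mult_distrib mult_ac)
  qed
  then have "(\<lambda>k. d (Suc k)) sums ((1 - q) * z * qexp q (q * z))"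
    unfolding qexp_powser by (simp add: sums_mult summable_sums summable_qexp[OF q])
  then have "d sums ((1 - q) * z * qexp q (q * z))"
    using sums_Suc_iff[of d] by (simp add: d_def)
  moreover have "d sums (qexp q z - qexp q (q * z))"
    unfolding d_def qexp_powser by (intro sums_diff summable_sums summable_qexp q)
  ultimately show ?thesis
    using sums_unique2 by (fastforce simp: algebra_simps)
qed

lemma
  assumes "0 < q" "q < 1"
  shows isCont_qexp_0: "isCont (qexp q) 0" and qexp_0: "qexp q 0 = 1"
proof -
  have "summable (\<lambda>k. qexp_coeff q k * 1 ^ k)" using summable_qexp[OF assms] .
  then show "isCont (qexp q) 0" unfolding qexp_powser[abs_def] by (rule isCont_powser) simp
  show "qexp q 0 = 1"
    unfolding qexp_powser using powser_zero[of "qexp_coeff q"]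
    by (simp add: qexp_coeff_def qfact_def)
qed

section \<open>The exponential weights at the Jackson nodes\<close>

definition qexp_node :: "real \<Rightarrow> nat \<Rightarrow> real" where
  "qexp_node q j = qexp q (- (q ^ Suc j / (1 - q)))"

definition qpochhammer :: "real \<Rightarrow> nat \<Rightarrow> real" where
  "qpochhammer q k = (\<Prod>i\<in>{1..k}. 1 - q ^ i)"

lemma qpochhammer_Suc: "qpochhammer q (Suc k) = qpochhammer q k * (1 - q ^ Suc k)"
  unfolding qpochhammer_def by (simp add: prod.atLeast1_atMost_eq prod.lessThan_Suc)

lemma qpochhammer_pos: "0 < q \<Longrightarrow> q < 1 \<Longrightarrow> 0 < qpochhammer q k"
  unfolding qpochhammer_def by (intro prod_pos) (auto simp: power_less_one_iff)

lemma qpochhammer_eq_qfact: "q \<noteq> 1 \<Longrightarrow> qpochhammer q k = qfact q k * (1 - q) ^ k"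
proof (induction k)
  case 0
  then show ?case by (simp add: qpochhammer_def qfact_def)
next
  case (Suc k)
  then show ?case
    using qint_times_one_minus[of q "Suc k"] by (simp add: qpochhammer_Suc qfact_Suc mult_ac)
qed

context
  fixes q :: real
  assumes q: "0 < q" "q < 1"
begin

lemma qexp_node_Suc: "qexp_node q j = (1 - q ^ Suc j) * qexp_node q (Suc j)"
  unfolding qexp_node_def using q qexp_functional_equation[OF q, of "- (q ^ Suc j / (1 - q))"]
  by (simp add: mult_ac)

lemma qexp_node_tendsto_1: "qexp_node q \<longlonglongrightarrow> 1"
proof -
  have "(\<lambda>j. - (q ^ Suc j / (1 - q))) \<longlonglongrightarrow> - (0 / (1 - q))"
    using q by (intro tendsto_intros LIMSEQ_Suc LIMSEQ_power_zero) auto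
  then have "(\<lambda>j. qexp q (- (q ^ Suc j / (1 - q)))) \<longlonglongrightarrow> qexp q 0"
    using isCont_qexp_0[OF q] by (intro isCont_tendsto_compose[where g="qexp q"]) auto
  then show ?thesis unfolding qexp_node_def qexp_0[OF q] .
qed

text \<open>Positivity propagates downwards through \<open>qexp_node_Suc\<close> from the indices where the
  limit 1 already forces it.\<close>
lemma qexp_node_pos: "0 < qexp_node q j"
proof -
  obtain J where J: "\<And>j. j \<ge> J \<Longrightarrow> qexp_node q j > 0"
    using order_tendstoD(1)[OF qexp_node_tendsto_1, of 0] by (auto simp: eventually_sequentially)
  have "qexp_node q j > 0" if "j \<le> max J j" for j
    using that
  proof (induction j rule: inc_induct)
    case base then show ?case using J by simp
  next
    case (step m)
    have "1 - q ^ Suc m > 0" using q power_Suc_less_one[of q m] by simp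
    then show ?case using step.IH qexp_node_Suc[of m] by simp
  qed
  then show ?thesis by simp
qed

lemma summable_qexp_node_moment: "summable (\<lambda>j. q ^ (j * Suc k) * qexp_node q j)"
proof -
  obtain K where K: "\<And>j. norm (qexp_node q j) \<le> K"
    using convergent_imp_Bseq[of "qexp_node q"] qexp_node_tendsto_1
    by (auto simp: convergent_def Bseq_def)
  have "q ^ Suc k < 1" using power_Suc_less_one[OF q] .
  then have "summable (\<lambda>j. K * (q ^ Suc k) ^ j)"
    using q by (intro summable_mult summable_geometric) auto
  moreover have "norm (q ^ (j * Suc k) * qexp_node q j) \<le> K * (q ^ Suc k) ^ j" for j
  proof -
    have "(q ^ Suc k) ^ j = q ^ (j * Suc k)" by (simp only: power_mult[symmetric] mult.commute)
    then show ?thesis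
      using K[of j] q by (simp add: abs_mult mult.commute mult_left_mono)
  qed
  ultimately show ?thesis by (rule summable_comparison_test'[where N=0])
qed

lemma sums_qexp_node: "(\<lambda>j. q ^ j * qexp_node q j) sums 1"
proof -
  have "(\<lambda>j. qexp_node q (Suc j) - qexp_node q j) sums (1 - qexp_node q 0)"
    by (rule telescope_sums[OF qexp_node_tendsto_1])
  moreover have "qexp_node q (Suc j) - qexp_node q j = q ^ Suc j * qexp_node q (Suc j)" for j
    using qexp_node_Suc[of j] by (simp add: algebra_simps)
  ultimately show ?thesis
    using sums_Suc_iff[of "\<lambda>j. q ^ j * qexp_node q j"] by simp
qed

text \<open>By \<open>qexp_node_Suc\<close> the moments \<open>T\<^sub>m = \<Sum>\<^sub>j q\<^bsup>jm\<^esup> qexp_node q j\<close> satisfy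
  \<open>q\<^sup>m T\<^sub>m = T\<^sub>m - T\<^sub>m\<^sub>+\<^sub>1\<close>.\<close>
lemma sums_qexp_node_moment: "(\<lambda>j. q ^ (j * Suc k) * qexp_node q j) sums qpochhammer q k"
proof (induction k)
  case 0
  then show ?case using sums_qexp_node by (simp add: qpochhammer_def)
next
  case (Suc k)
  define t where "t = (\<Sum>j. q ^ (j * Suc (Suc k)) * qexp_node q j)"
  have t: "(\<lambda>j. q ^ (j * Suc (Suc k)) * qexp_node q j) sums t"
    unfolding t_def by (intro summable_sums summable_qexp_node_moment)
  have "q ^ Suc k * (q ^ (j * Suc k) * qexp_node q j) =
      q ^ (Suc j * Suc k) * qexp_node q (Suc j) - q ^ (Suc j * Suc (Suc k)) * qexp_node q (Suc j)" for j
    by (subst qexp_node_Suc[of j]) (simp add: algebra_simps power_add power_mult)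
  moreover have "(\<lambda>j. q ^ (Suc j * Suc k) * qexp_node q (Suc j))
      sums (qpochhammer q k - qexp_node q 0)"
    using Suc.IH by (subst sums_Suc_iff) simp
  moreover have "(\<lambda>j. q ^ (Suc j * Suc (Suc k)) * qexp_node q (Suc j)) sums (t - qexp_node q 0)"
    using t by (subst sums_Suc_iff) simp
  ultimately have "(\<lambda>j. q ^ Suc k * (q ^ (j * Suc k) * qexp_node q j)) sums (qpochhammer q k - t)"
    using sums_diff by fastforce
  then have "q ^ Suc k * qpochhammer q k = qpochhammer q k - t"
    using sums_unique2[OF sums_mult[OF Suc.IH, of "q ^ Suc k"]] by simp
  then have "t = qpochhammer q (Suc k)" by (simp add: qpochhammer_Suc algebra_simps)
  with t show ?case by simp
qed

end

section \<open>The Baskakov basis\<close>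

lemma qpow1_Suc: "qpow1 q x (Suc m) = qpow1 q x m * (1 + q ^ m * x)"
  unfolding qpow1_def by simp

lemma qpow1_pos: "0 < q \<Longrightarrow> 0 \<le> x \<Longrightarrow> 0 < qpow1 q x m"
  unfolding qpow1_def by (intro prod_pos) (auto intro: add_pos_nonneg)

lemma p_nk_closed_form:
  "p_nk q (Suc m) k x = qfact q (m + k) / (qfact q k * qfact q m) * q ^ (k * (k - 1) div 2) * x ^ k
     / qpow1 q x (Suc (m + k))"
  unfolding p_nk_def qbinom_def by simp

context
  fixes q x :: real
  assumes q: "0 < q" "q < 1" and x: "0 \<le> x"
begin

lemma p_nk_nonneg: "0 \<le> p_nk q n k x"
  unfolding p_nk_def qbinom_def
  using qfact_pos[OF q] qfact_pos[OF q, THEN less_imp_le] qpow1_pos[OF q(1) x] x q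
  by (intro divide_nonneg_pos mult_nonneg_nonneg mult_pos_pos) auto

lemma p_nk_0: "p_nk q (Suc m) 0 x = 1 / qpow1 q x (Suc m)"
proof -
  have "qfact q 0 = 1" by (simp add: qfact_def)
  then show ?thesis unfolding p_nk_closed_form using qfact_pos[OF q, of m] by simp
qed

lemma p_nk_Suc:
  "p_nk q (Suc m) (Suc k) x = p_nk q (Suc m) k x * (qint q (Suc (m + k)) / qint q (Suc k))
     * (q ^ k * x / (1 + q ^ Suc (m + k) * x))"
proof -
  have "qint q (Suc (m + k)) > 0" "qint q (Suc k) > 0"
    using qint_ge_1[OF q] by (auto intro: less_le_trans[OF zero_less_one])
  moreover have "qfact q k > 0" "qfact q m > 0" "qfact q (m + k) > 0"
    using qfact_pos[OF q] by auto
  moreover have "qpow1 q x (Suc (m + k)) > 0" "1 + q * q ^ (m + k) * x > 0"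
    using qpow1_pos[OF q(1) x] q x by (auto intro: add_pos_nonneg)
  ultimately show ?thesis
    unfolding p_nk_closed_form add_Suc_right qfact_Suc qpow1_Suc triangular_Suc power_add power_Suc
    by (simp add: field_simps)
qed

lemma p_nk_Suc_le: "p_nk q (Suc m) (Suc k) x \<le> q ^ k * x / (1 - q) * p_nk q (Suc m) k x"
proof -
  have I: "0 \<le> qint q (Suc (m + k))" "1 \<le> qint q (Suc k)"
    using qint_ge_1[OF q] by (auto intro: order_trans[OF zero_le_one])
  have "qint q (Suc (m + k)) / qint q (Suc k) \<le> (1 / (1 - q)) / 1"
    using I qint_le_inverse[OF q] q by (intro frac_le) auto
  moreover have "q ^ k * x / (1 + q ^ Suc (m + k) * x) \<le> (q ^ k * x) / 1"
    using q x by (intro frac_le) auto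
  ultimately have "p_nk q (Suc m) (Suc k) x \<le> p_nk q (Suc m) k x * (1 / (1 - q)) * (q ^ k * x)"
    unfolding p_nk_Suc using I p_nk_nonneg q x by (intro mult_mono) auto
  then show ?thesis by (simp add: field_simps)
qed

lemma summable_p_nk: "summable (\<lambda>k. p_nk q (Suc m) k x)"
proof -
  have "(\<lambda>k. q ^ k * x / (1 - q)) \<longlonglongrightarrow> 0 * x / (1 - q)"
    using q by (intro tendsto_intros LIMSEQ_power_zero) auto
  then have "eventually (\<lambda>k. q ^ k * x / (1 - q) < 1/2) sequentially"
    by (intro order_tendstoD) auto
  then obtain N where N: "\<And>k. k \<ge> N \<Longrightarrow> q ^ k * x / (1 - q) < 1/2"
    by (auto simp: eventually_sequentially)
  show ?thesis
  proof (rule summable_ratio_test[of "1/2" N])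
    fix k assume "N \<le> k"
    have "norm (p_nk q (Suc m) (Suc k) x) \<le> q ^ k * x / (1 - q) * norm (p_nk q (Suc m) k x)"
      using p_nk_Suc_le[of m k] p_nk_nonneg[of "Suc m" k] p_nk_nonneg[of "Suc m" "Suc k"] by simp
    also have "\<dots> \<le> 1/2 * norm (p_nk q (Suc m) k x)"
      using N[OF \<open>N \<le> k\<close>] by (intro mult_right_mono) auto
    finally show "norm (p_nk q (Suc m) (Suc k) x) \<le> 1/2 * norm (p_nk q (Suc m) k x)" .
  qed simp
qed

lemma p_nk_shift:
  "(1 - q ^ Suc k) * p_nk q (Suc m) (Suc k) x = (1 - q ^ Suc m) * x * q ^ k * p_nk q (Suc (Suc m)) k x"
proof -
  have "qfact q k \<noteq> 0" "qfact q m \<noteq> 0" "qfact q (m + k) \<noteq> 0"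
    using qfact_pos[OF q] by (auto simp: less_imp_neq[symmetric])
  moreover have "qint q (Suc k) \<noteq> 0" "qint q (Suc m) \<noteq> 0" "qint q (Suc (m + k)) \<noteq> 0"
    using qint_ge_1[OF q] by (metis le_add1 not_one_le_zero plus_1_eq_Suc)+
  moreover have "qpow1 q x (Suc (Suc (m + k))) \<noteq> 0"
    using qpow1_pos[OF q(1) x] by (metis less_irrefl)
  ultimately show ?thesis
    apply (subst qint_times_one_minus[of q, symmetric], use q in simp)+
    unfolding p_nk_closed_form add_Suc_right add_Suc qfact_Suc triangular_Suc
    by (simp add: field_simps power_add)
qed

lemma qint_Suc_Suc_add: "qint q (Suc (Suc (m + k))) = qint q (Suc m) + q ^ Suc m * qint q (Suc k)"
  unfolding qint_def using q by (simp add: field_simps power_add)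

lemma p_nk_recurrence:
  "p_nk q (Suc (Suc m)) (Suc k) x * (1 + q ^ Suc (Suc (m + k)) * x)
     = p_nk q (Suc m) (Suc k) x + q ^ Suc (m + k) * x * p_nk q (Suc (Suc m)) k x"
proof -
  have F: "qfact q k \<noteq> 0" "qfact q m \<noteq> 0" "qfact q (m + k) \<noteq> 0"
    using qfact_pos[OF q] by (auto simp: less_imp_neq[symmetric])
  have I: "qint q (Suc k) \<noteq> 0" "qint q (Suc m) \<noteq> 0" "qint q (Suc (m + k)) \<noteq> 0"
    using qint_ge_1[OF q] by (metis le_add1 not_one_le_zero plus_1_eq_Suc)+
  have "0 \<le> q ^ Suc (Suc (m + k)) * x" using q x by simp
  then have Q: "qpow1 q x (Suc (Suc (m + k))) \<noteq> 0" "1 + q ^ Suc (Suc (m + k)) * x \<noteq> 0"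
    using qpow1_pos[OF q(1) x] by (metis less_irrefl, linarith)
  have qpow1_eq: "qpow1 q x (Suc (Suc (Suc (m + k))))
      = qpow1 q x (Suc (Suc (m + k))) * (1 + q ^ Suc (Suc (m + k)) * x)"
    by (rule qpow1_Suc)
  have qfact_eq: "qfact q (Suc (Suc (m + k))) = qfact q (m + k) * qint q (Suc (m + k))
      * (qint q (Suc m) + q ^ Suc m * qint q (Suc k))"
    unfolding qfact_Suc[of q "Suc (m + k)"] qfact_Suc[of q "m + k"] qint_Suc_Suc_add ..
  have field_identity: "\<And>G Ink Im Ik Fk Fm a b A X P E :: real. G \<noteq> 0 \<Longrightarrow> Ink \<noteq> 0 \<Longrightarrow>
      Im \<noteq> 0 \<Longrightarrow> Ik \<noteq> 0 \<Longrightarrow> Fk \<noteq> 0 \<Longrightarrow> Fm \<noteq> 0 \<Longrightarrow> P \<noteq> 0 \<Longrightarrow> E \<noteq> 0 \<Longrightarrow>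
      G * Ink * (Im + q * a * Ik) / (Fk * Ik * (Fm * Im)) * (A * b) * (x * X) / (P * E) * E
      = G * Ink / (Fk * Ik * Fm) * (A * b) * (x * X) / P
        + q * (a * b) * x * (G * Ink / (Fk * (Fm * Im)) * A * X / P)"
    by (simp add: field_simps)
  show ?thesis
    unfolding p_nk_closed_form add_Suc_right add_Suc qpow1_eq qfact_eq
    unfolding qfact_Suc triangular_Suc power_Suc power_add
    using field_identity[where G="qfact q (m + k)" and Ink="qint q (Suc (m + k))"
        and Im="qint q (Suc m)" and Ik="qint q (Suc k)" and Fk="qfact q k" and Fm="qfact q m"
        and a="q ^ m" and b="q ^ k" and A="q ^ (k * (k - 1) div 2)" and X="x ^ k"
        and P="qpow1 q x (Suc (Suc (m + k)))" and E="1 + q * (q * (q ^ m * q ^ k)) * x"] F I Q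
    by (simp add: ac_simps power_add)
qed

lemma p_nk_recurrence_0: "p_nk q (Suc (Suc m)) 0 x * (1 + q ^ Suc m * x) = p_nk q (Suc m) 0 x"
proof -
  have "1 + q ^ Suc m * x \<noteq> 0" using q x by (smt (verit) zero_le_mult_iff zero_le_power)
  then show ?thesis
    unfolding p_nk_0 qpow1_Suc[of q x "Suc m"] using qpow1_pos[OF q(1) x, of "Suc m"] by simp
qed

text \<open>For \<open>n = 1\<close> the basis telescopes:
  \<open>p_nk q 1 k x = r k - r (k + 1)\<close> with \<open>r k = q\<^bsup>k(k-1)/2\<^esup> x\<^sup>k / (1+x)\<^sub>q\<^sup>k\<close>.\<close>
lemma sums_p_nk_1: "(\<lambda>k. p_nk q 1 k x) sums 1"
proof -
  define r where "r k = q ^ (k * (k - 1) div 2) * x ^ k / qpow1 q x k" for k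
  have qpow1_ge: "qpow1 q x k \<ge> 1" for k
    unfolding qpow1_def using q x by (intro prod_ge_1) auto
  have "(\<lambda>k. q ^ (k * (k - 1) div 2) * x ^ k) \<longlonglongrightarrow> 0"
    by (rule summable_LIMSEQ_zero[OF summable_triangular_power[OF q]])
  moreover have "0 \<le> r k" for k
    unfolding r_def using q x qpow1_ge[of k] by simp
  moreover have "r k \<le> q ^ (k * (k - 1) div 2) * x ^ k" for k
  proof -
    have "r k \<le> q ^ (k * (k - 1) div 2) * x ^ k / 1"
      unfolding r_def using q x qpow1_ge[of k] by (intro frac_le) auto
    then show ?thesis by simp
  qed
  ultimately have "r \<longlonglongrightarrow> 0"
    by (intro tendsto_sandwich[of "\<lambda>_. 0" r sequentially "\<lambda>k. q ^ (k * (k - 1) div 2) * x ^ k"]) auto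
  then have "(\<lambda>k. r k - r (Suc k)) sums (r 0 - 0)" by (rule telescope_sums')
  moreover have "r 0 = 1" by (simp add: r_def qpow1_def)
  moreover have "r k - r (Suc k) = p_nk q 1 k x" for k
  proof -
    have ne: "1 + q ^ k * x \<noteq> 0" using q x by (smt (verit) zero_le_mult_iff zero_le_power)
    have "r (Suc k) = r k * (q ^ k * x) / (1 + q ^ k * x)"
      unfolding r_def triangular_Suc qpow1_Suc power_add power_Suc by (simp add: ac_simps)
    then have "r k - r (Suc k) = r k / (1 + q ^ k * x)"
      using ne by (simp add: field_simps)
    also have "\<dots> = p_nk q 1 k x"
    proof -
      have "qfact q 0 = 1" by (simp add: qfact_def)
      then show ?thesis
        using qfact_pos[OF q, of k] unfolding One_nat_def p_nk_closed_form r_def qpow1_Suc by simp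
    qed
    finally show ?thesis .
  qed
  ultimately show ?thesis by simp
qed

text \<open>Induction on \<open>n\<close>: by \<open>p_nk_recurrence\<close>, with \<open>a k = p_nk q (n + 1) k x\<close> and
  \<open>b k = q\<^bsup>n+k\<^esup> x a k\<close>, the sequence \<open>a k + b k - p_nk q n k x\<close> is \<open>b\<close> shifted by one.\<close>
lemma sums_p_nk: "(\<lambda>k. p_nk q (Suc m) k x) sums 1"
proof (induction m)
  case 0
  then show ?case using sums_p_nk_1 by simp
next
  case (Suc m)
  define a where "a k = p_nk q (Suc (Suc m)) k x" for k
  define b where "b k = q ^ Suc (m + k) * x * a k" for k
  have a: "summable a" unfolding a_def by (rule summable_p_nk)
  have "norm (b k) \<le> x * a k" for k
  proof -
    have "0 \<le> a k" unfolding a_def by (rule p_nk_nonneg)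
    moreover have "q ^ Suc (m + k) \<le> 1" using q by (intro power_le_one) auto
    ultimately have "q ^ Suc (m + k) * (x * a k) \<le> 1 * (x * a k)"
      using x by (intro mult_right_mono) auto
    then show ?thesis unfolding b_def using \<open>0 \<le> a k\<close> x q by (simp add: abs_mult mult_ac)
  qed
  then have b: "summable b"
    using summable_comparison_test'[where f=b and N=0, OF summable_mult[OF a, of x]] by blast
  define g where "g k = a k + b k - p_nk q (Suc m) k x" for k
  have g0: "g 0 = 0"
    using p_nk_recurrence_0[of m] unfolding g_def a_def b_def by (simp add: algebra_simps)
  have gSuc: "g (Suc k) = b k" for k
    using p_nk_recurrence[of m k] unfolding g_def a_def b_def by (simp add: algebra_simps)
  have "g sums suminf b"
    using sums_Suc_iff[of g "suminf b"] g0 gSuc b by (simp add: summable_sums)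
  moreover have "g sums (suminf a + suminf b - 1)"
    unfolding g_def using a b Suc.IH by (intro sums_diff sums_add summable_sums)
  ultimately have "suminf a + suminf b - 1 = suminf b" by (rule sums_unique2[symmetric])
  then have "suminf a = 1" by simp
  with summable_sums[OF a] show ?case unfolding a_def by simp
qed

text \<open>The shift \<open>p_nk_shift\<close> raises the power of \<open>1/q\<close> in a moment by one, at the price of a
  moment of the next basis.\<close>
lemma sums_p_nk_inverse_qpow_Suc:
  assumes s0: "(\<lambda>k. (1 / q) ^ (c * k) * p_nk q (Suc m) k x) sums s0"
    and s1: "(\<lambda>k. (1 / q) ^ (c * k) * p_nk q (Suc (Suc m)) k x) sums s1"
  shows "(\<lambda>k. (1 / q) ^ (Suc c * k) * p_nk q (Suc m) k x)
    sums (s0 + (1 / q) ^ Suc c * (1 - q ^ Suc m) * x * s1)"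
proof -
  have pw: "(1 / q) ^ (c * k) = (1 / q) ^ (Suc c * k) * q ^ k" for k
    using q by (simp add: power_add power_mult_distrib[symmetric])
  define d where "d k = (1 / q) ^ (Suc c * k) * p_nk q (Suc m) k x
      - (1 / q) ^ (c * k) * p_nk q (Suc m) k x" for k
  have d_Suc: "d (Suc j)
      = (1 / q) ^ Suc c * (1 - q ^ Suc m) * x * ((1 / q) ^ (c * j) * p_nk q (Suc (Suc m)) j x)" for j
  proof -
    have "d (Suc j) = (1 / q) ^ (Suc c * Suc j) * ((1 - q ^ Suc j) * p_nk q (Suc m) (Suc j) x)"
      unfolding d_def pw[of "Suc j"] by (simp add: algebra_simps)
    also have "\<dots> = (1 / q) ^ Suc c * (1 / q) ^ (Suc c * j)
        * ((1 - q ^ Suc m) * x * q ^ j * p_nk q (Suc (Suc m)) j x)"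
      by (simp only: p_nk_shift power_add mult_Suc_right)
    finally show ?thesis unfolding pw[of j] by (simp add: mult_ac)
  qed
  have "(\<lambda>j. d (Suc j)) sums ((1 / q) ^ Suc c * (1 - q ^ Suc m) * x * s1)"
    unfolding d_Suc by (intro sums_mult s1)
  then have "d sums ((1 / q) ^ Suc c * (1 - q ^ Suc m) * x * s1)"
    using sums_Suc_iff[of d] by (simp add: d_def)
  from sums_add[OF this s0] show ?thesis by (simp add: d_def add.commute)
qed

lemma sums_p_nk_inverse_qpow:
  "(\<lambda>k. (1 / q) ^ k * p_nk q (Suc m) k x) sums (1 + (1 - q ^ Suc m) * x / q)"
  using sums_p_nk_inverse_qpow_Suc[of 0 m 1 1] sums_p_nk[of m] sums_p_nk[of "Suc m"] by simp

lemma sums_p_nk_inverse_qpow_sq: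
  "(\<lambda>k. (1 / q) ^ (2 * k) * p_nk q (Suc m) k x) sums
     (1 + (1 - q ^ Suc m) * x / q
      + (1 - q ^ Suc m) * x / q ^ 2 * (1 + (1 - q ^ Suc (Suc m)) * x / q))"
proof -
  have "(\<lambda>k. (1 / q) ^ (1 * k) * p_nk q (Suc n) k x) sums (1 + (1 - q ^ Suc n) * x / q)" for n
    using sums_p_nk_inverse_qpow[of n] by simp
  from sums_p_nk_inverse_qpow_Suc[OF this this] show ?thesis
    by (simp add: power2_eq_square mult_ac mult_2_right)
qed

end

section \<open>The inner Jackson averages\<close>

definition jackson_weight :: "real \<Rightarrow> nat \<Rightarrow> nat \<Rightarrow> real" where
  "jackson_weight q k j = q ^ (j * Suc k) * qexp_node q j / qpochhammer q k"

definition jackson_point :: "real \<Rightarrow> nat \<Rightarrow> nat \<Rightarrow> real" where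
  "jackson_point q k j = q ^ Suc j / (1 - q) * (1 / q ^ k)"

definition jackson_mean :: "real \<Rightarrow> nat \<Rightarrow> real" where
  "jackson_mean q k = q / (1 - q) * ((1 / q) ^ k - q)"

context
  fixes q :: real
  assumes q: "0 < q" "q < 1"
begin

lemma jackson_weight_pos: "0 < jackson_weight q k j"
  unfolding jackson_weight_def using qexp_node_pos[OF q] qpochhammer_pos[OF q] q by simp

lemma sums_jackson_weight: "(\<lambda>j. jackson_weight q k j) sums 1"
  using sums_divide[OF sums_qexp_node_moment[OF q, of k], of "qpochhammer q k"]
    qpochhammer_pos[OF q, of k]
  by (simp add: jackson_weight_def)

lemma jackson_weight_mult_point:
  "jackson_weight q k j * jackson_point q k j = jackson_mean q k * jackson_weight q (Suc k) j"
proof -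
  let ?X = "q ^ (j * Suc (Suc k)) * qexp_node q j" and ?P = "qpochhammer q k"
    and ?D = "1 - q ^ Suc k"
  have D: "?D \<noteq> 0" using power_Suc_less_one[OF q, of k] by simp
  have "(1 / q) ^ k - q = ?D / q ^ k"
    using q by (simp add: power_divide field_simps)
  then have "jackson_mean q k * jackson_weight q (Suc k) j
      = q / (1 - q) * (?D / q ^ k) * (?X / (?P * ?D))"
    unfolding jackson_mean_def jackson_weight_def qpochhammer_Suc by simp
  also have "\<dots> = ?X * (q / ((1 - q) * q ^ k * ?P))"
  proof -
    have gen: "q / (1 - q) * (d / c) * (X / (P * d)) = X * (q / ((1 - q) * c * P))"
      if "d \<noteq> 0" "c \<noteq> 0" "P \<noteq> 0" for X P d c :: real
      using that q by (simp add: field_simps)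
    show ?thesis using q qpochhammer_pos[OF q, of k] D by (intro gen) auto
  qed
  also have "\<dots> = jackson_weight q k j * jackson_point q k j"
    unfolding jackson_weight_def jackson_point_def using q qpochhammer_pos[OF q, of k]
    by (simp add: field_simps power_add)
  finally show ?thesis ..
qed

lemma sums_jackson_weight_point:
  "(\<lambda>j. jackson_weight q k j * jackson_point q k j) sums jackson_mean q k"
  unfolding jackson_weight_mult_point using sums_mult[OF sums_jackson_weight] by simp

lemma sums_jackson_weight_point_sq:
  "(\<lambda>j. jackson_weight q k j * (jackson_point q k j)\<^sup>2)
     sums (q * jackson_mean q k * jackson_mean q (Suc k))"
proof -
  have "jackson_point q k j = q * jackson_point q (Suc k) j" for j
    using q by (simp add: jackson_point_def)
  then have "jackson_weight q k j * (jackson_point q k j)\<^sup>2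
      = q * jackson_mean q k * (jackson_weight q (Suc k) j * jackson_point q (Suc k) j)" for j
    by (simp add: power2_eq_square jackson_weight_mult_point[symmetric] mult_ac)
  then show ?thesis using sums_mult[OF sums_jackson_weight_point] by simp
qed

text \<open>At the Jackson node \<open>t = q\<^sup>j\<^sup>+\<^sup>1/(1 - q\<^sup>n)\<close> one has \<open>[n]\<^sub>q t = q\<^sup>j\<^sup>+\<^sup>1/(1 - q)\<close>, so the
  Jackson integral in the operator is a weighted sum over the points \<open>jackson_point q k j\<close>.\<close>
lemma qint_mult_jackson_int_s_nk:
  assumes n: "n \<ge> 1" and h: "summable (\<lambda>j. jackson_weight q k j * h (jackson_point q k j))"
  shows "qint q n * jackson_int q (\<lambda>t. 1 / q ^ (k + 1) * s_nk q n k t * h (qint q n * t * (1 / q ^ k)))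
      (q / (1 - q ^ n)) = (\<Sum>j. jackson_weight q k j * h (jackson_point q k j))"
proof -
  have qn: "q ^ n < 1" using q n by (simp add: power_less_one_iff)
  have node: "qint q n * (q / (1 - q ^ n) * q ^ j) = q ^ Suc j / (1 - q)" for j
  proof -
    have "\<And>u s::real. u \<noteq> 0 \<Longrightarrow> s \<noteq> 0 \<Longrightarrow> u / s * (q / u * q ^ j) = q * q ^ j / s"
      by (simp add: field_simps)
    then show ?thesis unfolding qint_def using q qn by simp
  qed
  have "1 / q ^ (k + 1) * s_nk q n k (q / (1 - q ^ n) * q ^ j)
      * h (qint q n * (q / (1 - q ^ n) * q ^ j) * (1 / q ^ k)) * q ^ j
      = 1 / q * (jackson_weight q k j * h (jackson_point q k j))" for j
  proof -
    have "s_nk q n k (q / (1 - q ^ n) * q ^ j) = qexp_node q j * (q ^ Suc j / (1 - q)) ^ k / qfact q k"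
      unfolding s_nk_def mult_minus_left node qexp_node_def ..
    then have "1 / q ^ (k + 1) * s_nk q n k (q / (1 - q ^ n) * q ^ j) * q ^ j
        = 1 / q * jackson_weight q k j"
      unfolding jackson_weight_def qpochhammer_eq_qfact[OF less_imp_neq[OF q(2)]]
      using q qfact_pos[OF q, of k]
      by (simp add: field_simps power_add power_mult_distrib power_divide power_mult[symmetric]
          mult.commute)
    moreover have "h (qint q n * (q / (1 - q ^ n) * q ^ j) * (1 / q ^ k)) = h (jackson_point q k j)"
      unfolding node jackson_point_def ..
    ultimately show ?thesis by (metis mult.assoc mult.commute)
  qed
  then have "jackson_int q (\<lambda>t. 1 / q ^ (k + 1) * s_nk q n k t * h (qint q n * t * (1 / q ^ k)))
      (q / (1 - q ^ n))
      = (1 - q) * (q / (1 - q ^ n)) * (\<Sum>j. 1 / q * (jackson_weight q k j * h (jackson_point q k j)))"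
    unfolding jackson_int_def by presburger
  also have "\<dots> = (1 - q) * (q / (1 - q ^ n)) * (1 / q)
      * (\<Sum>j. jackson_weight q k j * h (jackson_point q k j))"
    by (simp only: suminf_mult[OF h] mult.assoc)
  moreover have "u / s * (s * (q / u)) = q" if "u \<noteq> 0" "s \<noteq> 0" for u s :: real
    using that by (simp add: field_simps)
  then have "qint q n * ((1 - q) * (q / (1 - q ^ n))) = q"
    using q qn unfolding qint_def by simp
  ultimately show ?thesis
    using q by (simp only: mult.assoc[symmetric]) simp
qed

end

section \<open>Modulus of continuity and weighted averages\<close>

context
  fixes f :: "real \<Rightarrow> real" and B :: real
  assumes f_bounded: "\<And>y. 0 \<le> y \<Longrightarrow> \<bar>f y\<bar> \<le> B"
begin

lemma abs_diff_le_modcont: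
  assumes "0 \<le> t" "0 \<le> y" "\<bar>t - y\<bar> \<le> d"
  shows "\<bar>f t - f y\<bar> \<le> modcont f d"
proof -
  let ?S = "{\<bar>f t - f x\<bar> | t x. t \<ge> 0 \<and> x \<ge> 0 \<and> \<bar>t - x\<bar> \<le> d}"
  have "z \<le> 2 * B" if "z \<in> ?S" for z
  proof -
    obtain t' y' where "z = \<bar>f t' - f y'\<bar>" "0 \<le> t'" "0 \<le> y'" using \<open>z \<in> ?S\<close> by auto
    with f_bounded[of t'] f_bounded[of y'] show ?thesis by linarith
  qed
  then have "bdd_above ?S" by (rule bdd_aboveI)
  moreover have "\<bar>f t - f y\<bar> \<in> ?S" using assms by blast
  ultimately show ?thesis unfolding modcont_def by (rule cSup_upper[rotated])
qed

lemma modcont_nonneg: "0 \<le> d \<Longrightarrow> 0 \<le> modcont f d"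
  using abs_diff_le_modcont[of 0 0 d] by simp

text \<open>Split the segment from \<open>y\<close> to \<open>t\<close> into \<open>m\<close> pieces of length at most \<open>d\<close>.\<close>
lemma abs_diff_le_mult_modcont:
  assumes t: "0 \<le> t" and y: "0 \<le> y" and m: "0 < m" and d: "\<bar>t - y\<bar> \<le> real m * d"
  shows "\<bar>f t - f y\<bar> \<le> real m * modcont f d"
proof -
  define p where "p i = y + real i * (t - y) / real m" for i
  have "p 0 = y" "p m = t" using m by (simp_all add: p_def)
  have p_nonneg: "0 \<le> p i" if "i \<le> m" for i
  proof -
    have "0 \<le> real i / real m" "real i / real m \<le> 1" using that m by auto
    moreover have "p i = (1 - real i / real m) * y + (real i / real m) * t"
      unfolding p_def using m by (simp add: field_simps)
    ultimately show ?thesis using t y by simp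
  qed
  have "\<bar>f (p (Suc i)) - f (p i)\<bar> \<le> modcont f d" if "i < m" for i
  proof (rule abs_diff_le_modcont)
    have "p (Suc i) - p i = (t - y) / real m"
      unfolding p_def using m by (simp add: field_simps)
    then have "\<bar>p (Suc i) - p i\<bar> = \<bar>t - y\<bar> / real m"
      by (simp add: abs_divide)
    also have "\<dots> \<le> d" using d m by (simp add: pos_divide_le_eq mult.commute)
    finally show "\<bar>p (Suc i) - p i\<bar> \<le> d" .
  qed (use that p_nonneg in auto)
  then have "(\<Sum>i<m. \<bar>f (p (Suc i)) - f (p i)\<bar>) \<le> real m * modcont f d"
    using sum_mono[of "{..<m}" "\<lambda>i. \<bar>f (p (Suc i)) - f (p i)\<bar>" "\<lambda>_. modcont f d"] by simp
  moreover have "f t - f y = (\<Sum>i<m. f (p (Suc i)) - f (p i))"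
    using sum_lessThan_telescope[of "\<lambda>i. f (p i)" m] \<open>p 0 = y\<close> \<open>p m = t\<close> by simp
  ultimately show ?thesis by (metis order_trans sum_abs)
qed

lemma abs_diff_le_modcont_quadratic:
  assumes t: "0 \<le> t" and y: "0 \<le> y" and d: "0 < d"
  shows "\<bar>f t - f y\<bar> \<le> modcont f d * (1 + (t - y)\<^sup>2 / d\<^sup>2)"
proof (cases "\<bar>t - y\<bar> \<le> d")
  case True
  then have "\<bar>f t - f y\<bar> \<le> modcont f d" by (rule abs_diff_le_modcont[OF t y])
  also have "\<dots> \<le> modcont f d * (1 + (t - y)\<^sup>2 / d\<^sup>2)"
    using modcont_nonneg[of d] d by (simp add: mult_le_cancel_left1)
  finally show ?thesis .
next
  case False
  define l where "l = \<bar>t - y\<bar> / d"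
  have l: "1 < l" "\<bar>t - y\<bar> = l * d" using False d by (simp_all add: l_def)
  define m where "m = nat \<lceil>l\<rceil>"
  have m: "l \<le> real m" "real m \<le> l + 1"
    using l(1) of_int_ceiling_le_add_one[of l] unfolding m_def by linarith+
  then have "\<bar>f t - f y\<bar> \<le> real m * modcont f d"
    using l d by (intro abs_diff_le_mult_modcont[OF t y]) (auto intro: mult_right_mono)
  also have "\<dots> \<le> (1 + l\<^sup>2) * modcont f d"
  proof (rule mult_right_mono)
    have "l \<le> l\<^sup>2" using l(1) by (simp add: power2_eq_square)
    then show "real m \<le> 1 + l\<^sup>2" using m by linarith
  qed (use modcont_nonneg[of d] d in auto)
  also have "l\<^sup>2 = (t - y)\<^sup>2 / d\<^sup>2" unfolding l_def by (simp add: power_divide)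
  finally show ?thesis by (simp add: mult.commute)
qed

end

lemma weighted_mean_deviation_le:
  fixes w g e :: "nat \<Rightarrow> real"
  assumes w: "w sums 1" and we: "(\<lambda>j. w j * e j) sums E" and w_nonneg: "\<And>j. 0 \<le> w j"
    and dev: "\<And>j. \<bar>g j - c\<bar> \<le> A + D * e j"
  shows "summable (\<lambda>j. w j * g j)" and "\<bar>(\<Sum>j. w j * g j) - c\<bar> \<le> A + D * E"
proof -
  have bound: "(\<lambda>j. A * w j + D * (w j * e j)) sums (A * 1 + D * E)"
    by (intro sums_add sums_mult w we)
  have "norm (w j * (g j - c)) \<le> A * w j + D * (w j * e j)" for j
  proof -
    have "norm (w j * (g j - c)) = w j * \<bar>g j - c\<bar>" using w_nonneg[of j] by (simp add: abs_mult)
    also have "\<dots> \<le> w j * (A + D * e j)" by (rule mult_left_mono[OF dev w_nonneg])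
    finally show ?thesis by (simp add: algebra_simps)
  qed
  then have abs_summable: "summable (\<lambda>j. norm (w j * (g j - c)))"
    by (intro summable_comparison_test'[where N=0, OF sums_summable[OF bound]]) simp
  have abs_sum_le: "(\<Sum>j. norm (w j * (g j - c))) \<le> A + D * E"
    using suminf_le[OF _ abs_summable sums_summable[OF bound]] sums_unique[OF bound]
      \<open>\<And>j. norm (w j * (g j - c)) \<le> A * w j + D * (w j * e j)\<close>
    by simp
  have "(\<lambda>j. w j * (g j - c)) sums (\<Sum>j. w j * (g j - c))"
    using summable_norm_cancel[OF abs_summable] by (rule summable_sums)
  from sums_add[OF this sums_mult[OF w, of c]]
  have wg: "(\<lambda>j. w j * g j) sums ((\<Sum>j. w j * (g j - c)) + c)"
    by (simp add: algebra_simps)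
  then show "summable (\<lambda>j. w j * g j)" by (rule sums_summable)
  have "\<bar>\<Sum>j. w j * (g j - c)\<bar> \<le> (\<Sum>j. norm (w j * (g j - c)))"
    using summable_norm[OF abs_summable] by simp
  then show "\<bar>(\<Sum>j. w j * g j) - c\<bar> \<le> A + D * E"
    using sums_unique[OF wg] abs_sum_le by simp
qed

section \<open>The second central moment\<close>

lemma jackson_mean_mult_Suc:
  assumes "q \<noteq> 0"
  shows "q * jackson_mean q k * jackson_mean q (Suc k)
    = (q / (1 - q))\<^sup>2 * ((1 / q) ^ (2 * k) - (q + q\<^sup>2) * (1 / q) ^ k + q ^ 3)"
proof -
  have "q * (t * (a - q)) * (t * (1 / q * a - q)) = t\<^sup>2 * (a\<^sup>2 - (q + q\<^sup>2) * a + q ^ 3)"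
    for t a :: real
    using assms by (simp add: field_simps power2_eq_square power3_eq_cube)
  moreover have "(1 / q) ^ (2 * k) = ((1 / q) ^ k)\<^sup>2"
    by (simp add: power_mult[symmetric] mult.commute)
  ultimately show ?thesis unfolding jackson_mean_def power_Suc by presburger
qed

lemma baskakov_second_moment_identity:
  fixes q s N x :: real
  assumes q: "q \<noteq> 0" and s: "s = 1 - q" "s \<noteq> 0"
  shows "(q / s)\<^sup>2 * (1 + N * s * x / q + N * s * x / q ^ 2 * (1 + s * (1 + q * N) * x / q))
        - (q / s)\<^sup>2 * (q + q\<^sup>2) * (1 + N * s * x / q) + (q / s)\<^sup>2 * q ^ 3 * 1
      = q\<^sup>2 * (1 + q) + N * (1 + q)\<^sup>2 * x + N * (1 + q * N) * x\<^sup>2 / q"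
proof -
  let ?Z = "(1 + q) + N * (1 + q)\<^sup>2 * x / q\<^sup>2 + N * (1 + q * N) * x\<^sup>2 / q ^ 3"
  have "(1 + N * s * x / q + N * s * x / q ^ 2 * (1 + s * (1 + q * N) * x / q))
      - (q + q\<^sup>2) * (1 + N * s * x / q) + q ^ 3 = s\<^sup>2 * ?Z"
    unfolding s(1) using q by (simp add: field_simps power2_eq_square power3_eq_cube)
  moreover have "(q / s)\<^sup>2 * (s\<^sup>2 * ?Z) = q\<^sup>2 * ?Z"
    using s(2) by (simp add: power_divide)
  moreover have "q\<^sup>2 * ?Z = q\<^sup>2 * (1 + q) + N * (1 + q)\<^sup>2 * x + N * (1 + q * N) * x\<^sup>2 / q"
    using q by (simp add: field_simps power2_eq_square power3_eq_cube)
  ultimately show ?thesis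
    by (simp only: ring_distribs(1)[symmetric] right_diff_distrib[symmetric] mult.assoc mult_1_right)
qed

context
  fixes q x :: real
  assumes q: "0 < q" "q < 1" and x: "0 \<le> x"
begin

lemma one_minus_qpow_Suc_eq:
  "1 - q ^ Suc m = qint q (Suc m) * (1 - q)"
  "1 - q ^ Suc (Suc m) = (1 - q) * (1 + q * qint q (Suc m))"
proof -
  show N: "1 - q ^ Suc m = qint q (Suc m) * (1 - q)"
    using q by (simp add: qint_times_one_minus)
  have "1 - q ^ Suc (Suc m) = 1 - q * q ^ Suc m" by simp
  also have "\<dots> = 1 - q * (1 - qint q (Suc m) * (1 - q))" using N by simp
  finally show "1 - q ^ Suc (Suc m) = (1 - q) * (1 + q * qint q (Suc m))"
    by (simp add: algebra_simps)
qed

lemma sums_p_nk_jackson_mean: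
  "(\<lambda>k. p_nk q (Suc m) k x * jackson_mean q k) sums (q + qint q (Suc m) * x)"
proof -
  let ?N = "qint q (Suc m)" and ?p = "\<lambda>k. p_nk q (Suc m) k x"
  have "(\<lambda>k. q / (1 - q) * ((1 / q) ^ k * ?p k) - q / (1 - q) * q * ?p k)
      sums (q / (1 - q) * (1 + (1 - q ^ Suc m) * x / q) - q / (1 - q) * q * 1)"
    by (intro sums_diff sums_mult sums_p_nk[OF q x] sums_p_nk_inverse_qpow[OF q x])
  moreover have "q / s * (1 + N * s * x / q) - q / s * q * 1 = q + N * x"
    if "s = 1 - q" "s \<noteq> 0" for N s
  proof -
    have "q / s * (1 + N * s * x / q) = q / s + N * x" using that q by (simp add: field_simps)
    moreover have "q / s - q / s * q = q / s * s" by (simp add: right_diff_distrib that(1))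
    ultimately show ?thesis using that(2) by simp
  qed
  then have "q / (1 - q) * (1 + ?N * (1 - q) * x / q) - q / (1 - q) * q * 1 = q + ?N * x"
    using q by simp
  moreover have "?p k * jackson_mean q k = q / (1 - q) * ((1 / q) ^ k * ?p k) - q / (1 - q) * q * ?p k"
    for k
    unfolding jackson_mean_def by (simp add: algebra_simps)
  ultimately show ?thesis unfolding one_minus_qpow_Suc_eq by simp
qed

lemma sums_p_nk_jackson_mean_mult_Suc:
  "(\<lambda>k. p_nk q (Suc m) k x * (q * jackson_mean q k * jackson_mean q (Suc k)))
    sums (q\<^sup>2 * (1 + q) + qint q (Suc m) * (1 + q)\<^sup>2 * x
          + qint q (Suc m) * (1 + q * qint q (Suc m)) * x\<^sup>2 / q)"
proof -
  let ?N = "qint q (Suc m)" and ?p = "\<lambda>k. p_nk q (Suc m) k x" and ?t = "(q / (1 - q))\<^sup>2"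
  have "(\<lambda>k. ?t * ((1 / q) ^ (2 * k) * ?p k) - ?t * (q + q\<^sup>2) * ((1 / q) ^ k * ?p k) + ?t * q ^ 3 * ?p k)
      sums (?t * (1 + (1 - q ^ Suc m) * x / q
          + (1 - q ^ Suc m) * x / q ^ 2 * (1 + (1 - q ^ Suc (Suc m)) * x / q))
        - ?t * (q + q\<^sup>2) * (1 + (1 - q ^ Suc m) * x / q) + ?t * q ^ 3 * 1)"
    by (intro sums_diff sums_add sums_mult sums_p_nk[OF q x] sums_p_nk_inverse_qpow[OF q x]
        sums_p_nk_inverse_qpow_sq[OF q x])
  moreover have "?t * (1 + ?N * (1 - q) * x / q + ?N * (1 - q) * x / q ^ 2 * (1 + (1 - q) * (1 + q * ?N) * x / q))
        - ?t * (q + q\<^sup>2) * (1 + ?N * (1 - q) * x / q) + ?t * q ^ 3 * 1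
      = q\<^sup>2 * (1 + q) + ?N * (1 + q)\<^sup>2 * x + ?N * (1 + q * ?N) * x\<^sup>2 / q"
    using baskakov_second_moment_identity[of q "1 - q" ?N x] q by simp
  moreover have "?p k * (q * jackson_mean q k * jackson_mean q (Suc k))
      = ?t * ((1 / q) ^ (2 * k) * ?p k) - ?t * (q + q\<^sup>2) * ((1 / q) ^ k * ?p k) + ?t * q ^ 3 * ?p k"
    for k
  proof -
    have "q * jackson_mean q k * jackson_mean q (Suc k)
        = ?t * ((1 / q) ^ (2 * k) - (q + q\<^sup>2) * (1 / q) ^ k + q ^ 3)"
      using q by (intro jackson_mean_mult_Suc) simp
    then show ?thesis by (simp only:) (simp add: algebra_simps)
  qed
  ultimately show ?thesis unfolding one_minus_qpow_Suc_eq(2) one_minus_qpow_Suc_eq(1)[of m] by simp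
qed

end

lemma sums_jackson_weight_central_moment:
  assumes q: "0 < q" "q < 1" and "Q \<noteq> 0"
  shows "(\<lambda>j. jackson_weight q k j * ((jackson_point q k j + a) / Q - x)\<^sup>2)
    sums ((q * jackson_mean q k * jackson_mean q (Suc k) + 2 * (a - x * Q) * jackson_mean q k
           + (a - x * Q)\<^sup>2) / Q\<^sup>2)"
proof -
  let ?c = "a - x * Q"
  have "(\<lambda>j. (jackson_weight q k j * (jackson_point q k j)\<^sup>2
        + 2 * ?c * (jackson_weight q k j * jackson_point q k j) + ?c\<^sup>2 * jackson_weight q k j) / Q\<^sup>2)
      sums ((q * jackson_mean q k * jackson_mean q (Suc k) + 2 * ?c * jackson_mean q k + ?c\<^sup>2 * 1) / Q\<^sup>2)"
    by (intro sums_divide sums_add sums_mult sums_jackson_weight[OF q] sums_jackson_weight_point[OF q]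
        sums_jackson_weight_point_sq[OF q])
  moreover have "(jackson_point q k j + a) / Q - x = (jackson_point q k j + ?c) / Q" for j
    using assms by (simp add: field_simps)
  ultimately show ?thesis
    using assms by (simp add: power2_eq_square field_simps)
qed

lemma delta_n_eq:
  fixes q \<alpha> \<beta> x :: real and n :: nat
  defines "N \<equiv> qint q n" and "Q \<equiv> qint q n + \<beta>"
  assumes "q \<noteq> 0" "Q \<noteq> 0"
  shows "delta_n q n \<alpha> \<beta> x =
    (q\<^sup>2 * (1 + q) + N * (1 + q)\<^sup>2 * x + N * (1 + q * N) * x\<^sup>2 / q
     + 2 * (\<alpha> - x * Q) * (q + N * x) + (\<alpha> - x * Q)\<^sup>2) / Q\<^sup>2"
proof -
  have "\<beta> = Q - N" unfolding N_def Q_def by simp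
  then have "delta_n q n \<alpha> \<beta> x = (N * (q * N + 1) / (q * Q\<^sup>2) + 1 - 2 * N / Q) * x\<^sup>2
      + ((N + q\<^sup>2 * N - 2 * \<alpha> * (Q - N) - 2 * q * (Q - N)) / Q\<^sup>2) * x
      + (q\<^sup>2 * (1 + q) + 2 * q * \<alpha> + \<alpha>\<^sup>2) / Q\<^sup>2"
    unfolding delta_n_def N_def Q_def by simp
  also have "\<dots> = (q\<^sup>2 * (1 + q) + N * (1 + q)\<^sup>2 * x + N * (1 + q * N) * x\<^sup>2 / q
      + 2 * (\<alpha> - x * Q) * (q + N * x) + (\<alpha> - x * Q)\<^sup>2) / Q\<^sup>2"
  proof -
    have "(N' * (q * N' + 1) / (q * Q'\<^sup>2) + 1 - 2 * N' / Q') * x\<^sup>2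
        + ((N' + q\<^sup>2 * N' - 2 * \<alpha> * (Q' - N') - 2 * q * (Q' - N')) / Q'\<^sup>2) * x
        + (q\<^sup>2 * (1 + q) + 2 * q * \<alpha> + \<alpha>\<^sup>2) / Q'\<^sup>2
      = (q\<^sup>2 * (1 + q) + N' * (1 + q)\<^sup>2 * x + N' * (1 + q * N') * x\<^sup>2 / q
        + 2 * (\<alpha> - x * Q') * (q + N' * x) + (\<alpha> - x * Q')\<^sup>2) / Q'\<^sup>2"
      if "Q' \<noteq> 0" for N' Q' :: real
      using that assms(3) by (simp add: field_simps power2_eq_square)
    then show ?thesis using assms(4) by blast
  qed
  finally show ?thesis .
qed

section \<open>The approximation estimate\<close>

definition bss_node :: "real \<Rightarrow> nat \<Rightarrow> real \<Rightarrow> real \<Rightarrow> nat \<Rightarrow> nat \<Rightarrow> real" where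
  "bss_node q n \<alpha> \<beta> k j = (jackson_point q k j + \<alpha>) / (qint q n + \<beta>)"

context
  fixes q x \<alpha> \<beta> :: real and n :: nat
  assumes q: "0 < q" "q < 1" and x: "0 \<le> x" and n: "1 \<le> n" and \<alpha>: "0 \<le> \<alpha>" and \<beta>: "0 \<le> \<beta>"
begin

lemma qint_add_pos: "0 < qint q n + \<beta>"
  using qint_ge_1[OF q n] \<beta> by linarith

lemma bss_node_nonneg: "0 \<le> bss_node q n \<alpha> \<beta> k j"
  unfolding bss_node_def jackson_point_def using q \<alpha> qint_add_pos by simp

lemma summable_jackson_weight_bss_node:
  "summable (\<lambda>j. jackson_weight q k j * (bss_node q n \<alpha> \<beta> k j - x)\<^sup>2)"
  using sums_jackson_weight_central_moment[OF q, of "qint q n + \<beta>"] qint_add_pos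
  unfolding bss_node_def by (force intro: sums_summable)

lemma sums_p_nk_central_moment:
  "(\<lambda>k. p_nk q n k x * (\<Sum>j. jackson_weight q k j * (bss_node q n \<alpha> \<beta> k j - x)\<^sup>2))
    sums delta_n q n \<alpha> \<beta> x"
proof -
  obtain m where m: "n = Suc m" using n by (cases n) auto
  let ?N = "qint q n" and ?Q = "qint q n + \<beta>"
  let ?c = "\<alpha> - x * ?Q"
  have Q: "?Q \<noteq> 0" using qint_add_pos by simp
  have inner: "(\<Sum>j. jackson_weight q k j * (bss_node q n \<alpha> \<beta> k j - x)\<^sup>2)
      = (q * jackson_mean q k * jackson_mean q (Suc k) + 2 * ?c * jackson_mean q k + ?c\<^sup>2) / ?Q\<^sup>2"
    for k
    using sums_jackson_weight_central_moment[OF q Q] unfolding bss_node_def by (rule sums_unique[symmetric])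
  have "(\<lambda>k. (p_nk q n k x * (q * jackson_mean q k * jackson_mean q (Suc k))
        + 2 * ?c * (p_nk q n k x * jackson_mean q k) + ?c\<^sup>2 * p_nk q n k x) / ?Q\<^sup>2)
      sums ((q\<^sup>2 * (1 + q) + ?N * (1 + q)\<^sup>2 * x + ?N * (1 + q * ?N) * x\<^sup>2 / q
        + 2 * ?c * (q + ?N * x) + ?c\<^sup>2 * 1) / ?Q\<^sup>2)"
    unfolding m
    by (intro sums_divide sums_add sums_mult sums_p_nk[OF q x] sums_p_nk_jackson_mean[OF q x]
        sums_p_nk_jackson_mean_mult_Suc[OF q x])
  moreover have "(\<lambda>k. p_nk q n k x * ((q * jackson_mean q k * jackson_mean q (Suc k)
        + 2 * ?c * jackson_mean q k + ?c\<^sup>2) / ?Q\<^sup>2))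
      = (\<lambda>k. (p_nk q n k x * (q * jackson_mean q k * jackson_mean q (Suc k))
        + 2 * ?c * (p_nk q n k x * jackson_mean q k) + ?c\<^sup>2 * p_nk q n k x) / ?Q\<^sup>2)"
    by (rule ext) (simp add: add_divide_distrib algebra_simps)
  moreover have "delta_n q n \<alpha> \<beta> x = (q\<^sup>2 * (1 + q) + ?N * (1 + q)\<^sup>2 * x
      + ?N * (1 + q * ?N) * x\<^sup>2 / q + 2 * ?c * (q + ?N * x) + ?c\<^sup>2 * 1) / ?Q\<^sup>2"
    using delta_n_eq[OF _ Q] q by simp
  ultimately show ?thesis unfolding inner by (simp only:)
qed

text \<open>Positivity comes from \<open>k = 0\<close>: \<open>p_nk q n 0 x > 0\<close>, and the first two nodes
  \<open>bss_node q n \<alpha> \<beta> 0 0 \<noteq> bss_node q n \<alpha> \<beta> 0 1\<close> cannot both equal \<open>x\<close>.\<close>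
lemma delta_n_pos: "0 < delta_n q n \<alpha> \<beta> x"
proof -
  obtain m where m: "n = Suc m" using n by (cases n) auto
  let ?E = "\<lambda>k. \<Sum>j. jackson_weight q k j * (bss_node q n \<alpha> \<beta> k j - x)\<^sup>2"
  have term_nonneg: "0 \<le> jackson_weight q k j * (bss_node q n \<alpha> \<beta> k j - x)\<^sup>2" for k j
    using jackson_weight_pos[OF q, of k j] by simp
  have "jackson_point q 0 0 \<noteq> jackson_point q 0 1"
    unfolding jackson_point_def using q by (simp add: field_simps)
  then have "bss_node q n \<alpha> \<beta> 0 0 \<noteq> bss_node q n \<alpha> \<beta> 0 1"
    unfolding bss_node_def using qint_add_pos by (simp add: divide_cancel_right)
  then obtain j where j: "bss_node q n \<alpha> \<beta> 0 j \<noteq> x" by metis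
  have E0: "0 < ?E 0"
    by (intro suminf_pos2[OF summable_jackson_weight_bss_node, where i=j] term_nonneg)
      (use jackson_weight_pos[OF q, of 0 j] j in simp)
  have E_nonneg: "0 \<le> ?E k" for k
    by (rule suminf_nonneg[OF summable_jackson_weight_bss_node term_nonneg])
  have "0 < p_nk q n 0 x"
    unfolding m p_nk_0[OF q x] using qpow1_pos[OF q(1) x] by simp
  then have "0 < (\<Sum>k. p_nk q n k x * ?E k)"
    by (intro suminf_pos2[OF sums_summable[OF sums_p_nk_central_moment], of 0])
      (use p_nk_nonneg[OF q x] E_nonneg E0 in auto)
  then show ?thesis using sums_unique[OF sums_p_nk_central_moment] by simp
qed

lemma BSS_eq_double_sum:
  assumes f: "\<And>y. 0 \<le> y \<Longrightarrow> \<bar>f y\<bar> \<le> B"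
  shows "BSS n \<alpha> \<beta> f q x = (\<Sum>k. p_nk q n k x * (\<Sum>j. jackson_weight q k j * f (bss_node q n \<alpha> \<beta> k j)))"
proof -
  obtain m where m: "n = Suc m" using n by (cases n) auto
  let ?N = "qint q n"
  let ?L = "\<lambda>k. \<Sum>j. jackson_weight q k j * f (bss_node q n \<alpha> \<beta> k j)"
  have zero: "(\<lambda>j. w j * 0) sums 0" for w :: "nat \<Rightarrow> real" by simp
  have "summable (\<lambda>j. jackson_weight q k j * f (bss_node q n \<alpha> \<beta> k j))"
    and L: "\<bar>?L k - 0\<bar> \<le> B + 0 * 0" for k
    using weighted_mean_deviation_le[OF sums_jackson_weight[OF q] zero, where c=0 and A=B and D=0]
      jackson_weight_pos[OF q] f[OF bss_node_nonneg]
    by (auto simp: less_imp_le)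
  then have J: "?N * jackson_int q (\<lambda>t. 1 / q ^ (k + 1) * s_nk q n k t
      * f ((?N * t * (1 / q ^ k) + \<alpha>) / (?N + \<beta>))) (q / (1 - q ^ n)) = ?L k" for k
    using qint_mult_jackson_int_s_nk[OF q n, of k "\<lambda>y. f ((y + \<alpha>) / (?N + \<beta>))"]
    unfolding bss_node_def by simp
  have "summable (\<lambda>k. p_nk q n k x * ?L k)"
    using weighted_mean_deviation_le(1)[OF sums_p_nk[OF q x, of m] zero, where c=0 and A=B and D=0] L
      p_nk_nonneg[OF q x] unfolding m by auto
  moreover have "?N \<noteq> 0" using qint_ge_1[OF q n] by simp
  ultimately show ?thesis
    unfolding BSS_def J[symmetric] by (simp add: suminf_mult[symmetric] mult_ac)
qed

theorem BSS_approximation: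
  assumes f: "\<And>y. 0 \<le> y \<Longrightarrow> \<bar>f y\<bar> \<le> B"
  shows "\<bar>BSS n \<alpha> \<beta> f q x - f x\<bar> \<le> 2 * modcont f (sqrt (delta_n q n \<alpha> \<beta> x))"
proof -
  obtain m where m: "n = Suc m" using n by (cases n) auto
  define D where "D = delta_n q n \<alpha> \<beta> x"
  define \<omega> where "\<omega> = modcont f (sqrt D)"
  let ?E = "\<lambda>k. \<Sum>j. jackson_weight q k j * (bss_node q n \<alpha> \<beta> k j - x)\<^sup>2"
  let ?L = "\<lambda>k. \<Sum>j. jackson_weight q k j * f (bss_node q n \<alpha> \<beta> k j)"
  have D: "0 < D" unfolding D_def by (rule delta_n_pos)
  have dev: "\<bar>f y - f x\<bar> \<le> \<omega> + \<omega> / D * (y - x)\<^sup>2" if "0 \<le> y" for y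
    using abs_diff_le_modcont_quadratic[where d="sqrt D", OF f that x] D
    unfolding \<omega>_def by (simp add: algebra_simps)
  have inner: "\<bar>?L k - f x\<bar> \<le> \<omega> + \<omega> / D * ?E k" for k
    by (rule weighted_mean_deviation_le(2)[OF sums_jackson_weight[OF q]
          summable_sums[OF summable_jackson_weight_bss_node]
          less_imp_le[OF jackson_weight_pos[OF q]] dev[OF bss_node_nonneg]])
  have "\<bar>(\<Sum>k. p_nk q n k x * ?L k) - f x\<bar> \<le> \<omega> + \<omega> / D * D"
    unfolding D_def
    by (rule weighted_mean_deviation_le(2)[OF sums_p_nk[OF q x, of m, folded m]
          sums_p_nk_central_moment p_nk_nonneg[OF q x] inner[unfolded D_def]])
  then show ?thesis
    using D BSS_eq_double_sum[OF f] unfolding D_def \<omega>_def by simp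
qed

end

text \<open>The estimate holds for each \<open>n\<close> separately.\<close>
theorem mainTheorem3:
  fixes \<alpha> \<beta> a :: real and q :: "nat \<Rightarrow> real" and f :: "real \<Rightarrow> real"
  assumes "0 \<le> \<alpha>" and "\<alpha> \<le> \<beta>"
    and "\<And>n. 0 < q n \<and> q n < 1"
    and "st_lim q 1"
    and "st_lim (\<lambda>n. q n ^ n) a" and "a < 1"
    and "st_lim (\<lambda>n. 1 / qint (q n) n) 0"
    and "mono_on {0..} f" and "bounded (f ` {0..})" and "continuous_on {0..} f"
  shows "\<forall>x\<ge>0. \<forall>n\<ge>1.
     \<bar>BSS n \<alpha> \<beta> f (q n) x - f x\<bar> \<le> 2 * modcont f (sqrt (delta_n (q n) n \<alpha> \<beta> x))"
proof (intro allI impI)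
  fix x :: real and n :: nat
  assume "0 \<le> x" "1 \<le> n"
  obtain B where "\<And>y. 0 \<le> y \<Longrightarrow> \<bar>f y\<bar> \<le> B"
    using \<open>bounded (f ` {0..})\<close> by (auto simp: bounded_iff)
  moreover have "0 < q n" "q n < 1" using assms(3) by auto
  ultimately show "\<bar>BSS n \<alpha> \<beta> f (q n) x - f x\<bar> \<le> 2 * modcont f (sqrt (delta_n (q n) n \<alpha> \<beta> x))"
    using \<open>0 \<le> x\<close> \<open>1 \<le> n\<close> assms(1,2) by (intro BSS_approximation) auto
qed

end
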